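(* Let $q$ be a prime power and $r\ge 0$, $v$ integers. There exists a spanning projective $(r+1)$-cylinder in $\mathrm{PG}(v-1,q)$ if and only if $r+2\le v\le r+q$.
   Context: $\mathrm{PG}(v-1,q)$ is the projective space of $\mathbb{F}_q^v$; a $k$-space is a $k$-dimensional subspace of $\mathbb{F}_q^v$ (points are $1$-spaces, hyperplanes are $(v-1)$-spaces). An $(r+1)$-cylinder is a multiset of $q^{r+1}$ points which arises as the union (counted with multiplicity) of the point sets $L_1\setminus F,\dots,L_q\setminus F$, where $L_1,\dots,L_q$ are $(r+1)$-spaces and $F$ is an $r$-space contained in every $L_i$ (here $L_i\setminus F$ means the set of points of $L_i$ not contained in $F$). The cylinder is called projective if this multiset is a set (no point has multiplicity $>1$), and spanning if its points span $\mathbb{F}_q^v$. *)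

theory Defs
  imports Complex_Main "HOL-Library.Multiset" "HOL-Library.Function_Algebras"
begin

text \<open>Model of F_q^v: functions nat => 'a (pointwise scaling) vanishing from index v on.
  The field F_q is an arbitrary finite field type 'a, q = card (UNIV :: 'a set).\<close>

definition fscale :: "'a::field \<Rightarrow> (nat \<Rightarrow> 'a) \<Rightarrow> (nat \<Rightarrow> 'a)" where
  "fscale c x = (\<lambda>i. c * x i)"

global_interpretation fvs: vector_space "fscale :: 'a::field \<Rightarrow> (nat \<Rightarrow> 'a) \<Rightarrow> _"
  by unfold_locales (auto simp: fscale_def fun_eq_iff algebra_simps)

definition ambient :: "nat \<Rightarrow> (nat \<Rightarrow> 'a::field) set" where
  "ambient v = {x. \<forall>i\<ge>v. x i = 0}"

definition kspace :: "nat \<Rightarrow> nat \<Rightarrow> (nat \<Rightarrow> 'a::field) set \<Rightarrow> bool" where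
  "kspace v k S \<longleftrightarrow> fvs.subspace S \<and> S \<subseteq> ambient v \<and> fvs.dim S = k"

definition points :: "nat \<Rightarrow> (nat \<Rightarrow> 'a::field) set \<Rightarrow> (nat \<Rightarrow> 'a) set set" where
  "points v S = {P. kspace v 1 P \<and> P \<subseteq> S}"

definition cylinder :: "nat \<Rightarrow> nat \<Rightarrow> (nat \<Rightarrow> 'a::{finite,field}) set multiset \<Rightarrow> bool" where
  "cylinder v r C \<longleftrightarrow>
     (\<exists>L F. kspace v r F \<and> (\<forall>i<card (UNIV :: 'a set). kspace v (r+1) (L i) \<and> F \<subseteq> L i) \<and>
        C = (\<Sum>i<card (UNIV :: 'a set). mset_set (points v (L i) - points v F)))"

definition projective_mset :: "'b multiset \<Rightarrow> bool" where
  "projective_mset C \<longleftrightarrow> (\<forall>x. count C x \<le> 1)"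

definition spanning :: "nat \<Rightarrow> (nat \<Rightarrow> 'a::field) set multiset \<Rightarrow> bool" where
  "spanning v C \<longleftrightarrow> fvs.span (\<Union> (set_mset C)) = ambient v"

end

theory Submission
  imports Defs "HOL-Library.Disjoint_Sets"
begin

text \<open>
  Necessity: every \<open>L\<^sub>i\<close> is spanned by \<open>F\<close> and any vector \<open>x\<^sub>i \<in> L\<^sub>i - F\<close>,
  so the points of a cylinder span at most \<open>r + q\<close> dimensions; and if \<open>v = r + 1\<close>, every
  \<open>L\<^sub>i\<close> is the whole space, so the \<open>q \<ge> 2\<close> summands \<open>L\<^sub>i - F\<close> coincide and the cylinder is
  not projective.

  Sufficiency: let \<open>F = \<langle>e\<^sub>0, \<dots>, e\<^sub>r\<^sub>-\<^sub>1\<rangle>\<close>, \<open>n = v - r\<close> and \<open>L\<^sub>i = F + \<langle>w\<^sub>i\<rangle>\<close>, where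
  \<open>w\<^sub>i = e\<^sub>r\<^sub>+\<^sub>i\<close> for \<open>i < n\<close> and \<open>w\<^sub>i = e\<^sub>r + c\<^sub>i e\<^sub>r\<^sub>+\<^sub>1\<close> for the remaining \<open>q - n\<close> indices,
  with distinct nonzero scalars \<open>c\<^sub>i\<close>. Modulo \<open>F\<close> the \<open>w\<^sub>i\<close> are pairwise non-proportional, so
  the sets \<open>L\<^sub>i - F\<close> are pairwise disjoint; they contain \<open>e\<^sub>r, \<dots>, e\<^sub>v\<^sub>-\<^sub>1\<close> and
  \<open>e\<^sub>r + e\<^sub>k\<close> for \<open>k < r\<close>, hence span everything.
\<close>

section \<open>Dimension in finitely spanned subspaces\<close>

text \<open>
  Vectors of \<open>\<bbbF>\<^sub>q\<^sup>v\<close> are modelled in the infinite-dimensional space \<open>nat \<Rightarrow> 'a\<close>, so the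
  usual dimension arguments need a finite spanning set.
\<close>

context vector_space
begin

lemma dim_le_dim_of_subset:
  assumes "S \<subseteq> T" "T \<subseteq> span W" "finite W"
  shows "dim S \<le> dim T"
proof -
  obtain C where C: "C \<subseteq> T" "independent C" "T \<subseteq> span C" "card C = dim T"
    using basis_exists by blast
  have "finite C"
    using independent_span_bound[OF assms(3) C(2)] C(1) assms(2) by blast
  with C assms(1) show ?thesis
    using dim_le_card[of S C] by auto
qed

lemma subspace_eq_of_dim_le:
  assumes "subspace S" "subspace T" "S \<subseteq> T" "T \<subseteq> span W" "finite W" "dim T \<le> dim S"
  shows "S = T"
proof (rule ccontr)
  assume "S \<noteq> T"
  then obtain t where t: "t \<in> T" "t \<notin> S" using assms(3) by blast
  obtain B where B: "B \<subseteq> S" "independent B" "S \<subseteq> span B" "card B = dim S"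
    using basis_exists by blast
  have "t \<notin> span B"
    using t span_minimal[OF B(1) assms(1)] by blast
  have "finite B"
    using independent_span_bound[OF assms(5) B(2)] B(1) assms(3,4) by blast
  have "Suc (dim S) = dim (insert t B)"
    using \<open>t \<notin> span B\<close> \<open>finite B\<close> B(2,4) span_base
    by (metis card_insert_disjoint dim_eq_card_independent independent_insertI)
  also have "\<dots> \<le> dim T"
    using dim_le_dim_of_subset[OF _ assms(4,5)] t B(1) assms(3) by blast
  finally show False using assms(6) by simp
qed

end

definition unit_vec :: "nat \<Rightarrow> nat \<Rightarrow> 'a::zero_neq_one" where
  "unit_vec k = (\<lambda>i. if i = k then 1 else 0)"

lemma unit_vec_apply: "unit_vec k j = (if j = k then 1 else 0)"
  by (simp add: unit_vec_def)

lemma sum_fun_apply: "(\<Sum>k\<in>K. f k) j = (\<Sum>k\<in>K. f k j)"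
  by (induction K rule: infinite_finite_induct) auto

lemma in_span_unit_vecs:
  assumes "\<forall>j\<ge>n. x j = (0::'a::field)"
  shows "x \<in> fvs.span (unit_vec ` {..<n})"
proof -
  have "x = (\<Sum>k<n. fscale (x k) (unit_vec k))"
  proof
    fix j
    have "(\<Sum>k<n. fscale (x k) (unit_vec k)) j = (\<Sum>k<n. if j = k then x j else 0)"
      unfolding sum_fun_apply by (rule sum.cong) (auto simp: fscale_def unit_vec_apply)
    also have "\<dots> = x j"
      using assms by (auto simp: not_less)
    finally show "x j = (\<Sum>k<n. fscale (x k) (unit_vec k)) j" by simp
  qed
  also have "\<dots> \<in> fvs.span (unit_vec ` {..<n})"
    by (intro fvs.span_sum fvs.span_scale fvs.span_base) auto
  finally show ?thesis .
qed

lemma coord_eq_0_of_in_span_unit_vecs: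
  assumes "x \<in> fvs.span (unit_vec ` K :: (nat \<Rightarrow> 'a::field) set)" "j \<notin> K"
  shows "x j = 0"
proof -
  have "fvs.span (unit_vec ` K :: (nat \<Rightarrow> 'a) set) \<subseteq> {x. x j = 0}"
    by (rule fvs.span_minimal)
      (use assms(2) in \<open>auto simp: unit_vec_apply fscale_def intro!: fvs.subspaceI\<close>)
  with assms(1) show ?thesis by auto
qed

lemma not_in_span_unit_vecs:
  assumes "r \<le> k" "x k \<noteq> (0::'a::field)"
  shows "x \<notin> fvs.span (unit_vec ` {..<r})"
  using assms coord_eq_0_of_in_span_unit_vecs[of x "{..<r}" k] by auto

lemma subspace_ambient: "fvs.subspace (ambient v :: (nat \<Rightarrow> 'a::field) set)"
  unfolding ambient_def by (rule fvs.subspaceI) (auto simp: fscale_def)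

lemma ambient_eq_span_unit_vecs:
  "ambient v = fvs.span (unit_vec ` {..<v} :: (nat \<Rightarrow> 'a::field) set)"
proof
  show "ambient v \<subseteq> fvs.span (unit_vec ` {..<v})"
    using in_span_unit_vecs unfolding ambient_def by blast
  show "fvs.span (unit_vec ` {..<v}) \<subseteq> (ambient v :: (nat \<Rightarrow> 'a) set)"
    by (rule fvs.span_minimal[OF _ subspace_ambient]) (auto simp: ambient_def unit_vec_apply)
qed

lemma unit_vecs_subset_ambient: "r \<le> v \<Longrightarrow> unit_vec ` {..<r} \<subseteq> ambient v"
  by (auto simp: unit_vec_apply ambient_def)

lemma independent_unit_vecs: "fvs.independent (unit_vec ` {..<n} :: (nat \<Rightarrow> 'a::field) set)"
proof (induction n)
  case 0
  then show ?case by (simp add: fvs.independent_empty)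
next
  case (Suc n)
  have "unit_vec n \<notin> fvs.span (unit_vec ` {..<n} :: (nat \<Rightarrow> 'a) set)"
    using coord_eq_0_of_in_span_unit_vecs[of "unit_vec n" "{..<n}" n] by (auto simp: unit_vec_apply)
  with Suc show ?case
    by (simp add: lessThan_Suc fvs.independent_insertI)
qed

lemma card_unit_vecs: "card (unit_vec ` {..<n} :: (nat \<Rightarrow> 'a::zero_neq_one) set) = n"
proof -
  have "inj (unit_vec :: nat \<Rightarrow> nat \<Rightarrow> 'a)"
    by (rule injI) (metis unit_vec_def one_neq_zero)
  then show ?thesis by (simp add: card_image inj_on_subset)
qed

lemma dim_span_unit_vecs: "fvs.dim (fvs.span (unit_vec ` {..<n}) :: (nat \<Rightarrow> 'a::field) set) = n"
  using fvs.dim_span_eq_card_independent[OF independent_unit_vecs] card_unit_vecs by metis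

lemma dim_ambient: "fvs.dim (ambient v :: (nat \<Rightarrow> 'a::field) set) = v"
  by (simp only: ambient_eq_span_unit_vecs dim_span_unit_vecs)

lemma finite_ambient: "finite (ambient v :: (nat \<Rightarrow> 'a::{finite,field}) set)"
proof -
  have "ambient v \<subseteq> (\<lambda>xs i. if i < v then xs ! i else (0::'a)) ` {xs. set xs \<subseteq> UNIV \<and> length xs = v}"
  proof
    fix x :: "nat \<Rightarrow> 'a"
    assume "x \<in> ambient v"
    then have "x = (\<lambda>i. if i < v then map x [0..<v] ! i else 0)"
      by (auto simp: ambient_def fun_eq_iff)
    then show "x \<in> (\<lambda>xs i. if i < v then xs ! i else (0::'a)) ` {xs. set xs \<subseteq> UNIV \<and> length xs = v}"
      by (intro image_eqI[where x = "map x [0..<v]"]) auto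
  qed
  moreover have "finite {xs. set xs \<subseteq> (UNIV :: 'a set) \<and> length xs = v}"
    by (rule finite_lists_length_eq) simp
  ultimately show ?thesis
    by (meson finite_imageI finite_subset)
qed

lemma finite_points: "finite (points v S :: (nat \<Rightarrow> 'a::{finite,field}) set set)"
proof -
  have "points v S \<subseteq> Pow (ambient v)" by (auto simp: points_def kspace_def)
  then show ?thesis using finite_ambient finite_subset by blast
qed

lemma kspace_ambient: "kspace v v (ambient v :: (nat \<Rightarrow> 'a::field) set)"
  by (simp add: kspace_def subspace_ambient dim_ambient)

lemma kspace_subset_span_unit_vecs:
  "kspace v k S \<Longrightarrow> S \<subseteq> fvs.span (unit_vec ` {..<v} :: (nat \<Rightarrow> 'a::field) set)"
  by (simp add: kspace_def flip: ambient_eq_span_unit_vecs)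

lemma kspace_dim_le:
  assumes "kspace v k (S :: (nat \<Rightarrow> 'a::field) set)"
  shows "k \<le> v"
proof -
  have "fvs.dim S \<le> fvs.dim (ambient v :: (nat \<Rightarrow> 'a) set)"
    using assms kspace_subset_span_unit_vecs[OF kspace_ambient]
    by (intro fvs.dim_le_dim_of_subset) (auto simp: kspace_def)
  with assms show ?thesis by (simp add: kspace_def dim_ambient)
qed

lemma kspace_eq_of_subset:
  assumes "kspace v k (S :: (nat \<Rightarrow> 'a::field) set)" "kspace v k T" "S \<subseteq> T"
  shows "S = T"
  using assms kspace_subset_span_unit_vecs[OF assms(2)]
  by (intro fvs.subspace_eq_of_dim_le) (auto simp: kspace_def)

lemma kspace_not_subset:
  assumes "kspace v k (S :: (nat \<Rightarrow> 'a::field) set)" "kspace v (k + 1) T"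
  shows "\<not> T \<subseteq> S"
proof
  assume "T \<subseteq> S"
  then have "fvs.dim T \<le> fvs.dim S"
    using kspace_subset_span_unit_vecs[OF assms(1)] by (intro fvs.dim_le_dim_of_subset) auto
  with assms show False by (simp add: kspace_def)
qed

lemma kspace_eq_span_insert:
  assumes F: "kspace v r (F :: (nat \<Rightarrow> 'a::field) set)" and L: "kspace v (r + 1) L"
    and "F \<subseteq> L" "x \<in> L" "x \<notin> F"
  shows "L = fvs.span (insert x F)"
proof -
  let ?S = "fvs.span (insert x F)"
  have W: "L \<subseteq> fvs.span (unit_vec ` {..<v})" "finite (unit_vec ` {..<v} :: (nat \<Rightarrow> 'a) set)"
    using kspace_subset_span_unit_vecs[OF L] by auto
  have "fvs.subspace L"
    using L by (simp add: kspace_def)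
  then have "?S \<subseteq> L"
    using assms(3,4) by (intro fvs.span_minimal) auto
  have "F \<subseteq> ?S"
    by (meson fvs.span_superset subset_insertI subset_trans)
  have "F \<noteq> ?S"
    using assms(5) fvs.span_base by blast
  then have "\<not> fvs.dim ?S \<le> r"
    using fvs.subspace_eq_of_dim_le[OF _ fvs.subspace_span \<open>F \<subseteq> ?S\<close> subset_trans[OF \<open>?S \<subseteq> L\<close> W(1)] W(2)] F
    by (auto simp: kspace_def)
  then show ?thesis
    using fvs.subspace_eq_of_dim_le[OF fvs.subspace_span \<open>fvs.subspace L\<close> \<open>?S \<subseteq> L\<close> W] L
    by (auto simp: kspace_def)
qed

lemma kspace_span_independent:
  assumes "fvs.independent B" "B \<subseteq> ambient v"
  shows "kspace v (card B) (fvs.span B :: (nat \<Rightarrow> 'a::field) set)"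
  using assms fvs.span_minimal[OF assms(2) subspace_ambient]
  by (simp add: kspace_def fvs.dim_eq_card_independent)

lemma kspace_span_unit_vecs:
  "r \<le> v \<Longrightarrow> kspace v r (fvs.span (unit_vec ` {..<r}) :: (nat \<Rightarrow> 'a::field) set)"
  using kspace_span_independent[OF independent_unit_vecs unit_vecs_subset_ambient]
  by (simp add: card_unit_vecs)

lemma kspace_span_insert_unit_vecs:
  assumes "r \<le> v" "w \<in> ambient v" "w \<notin> fvs.span (unit_vec ` {..<r})"
  shows "kspace v (r + 1) (fvs.span (insert w (unit_vec ` {..<r})) :: (nat \<Rightarrow> 'a::field) set)"
proof -
  have E: "fvs.independent (unit_vec ` {..<r} :: (nat \<Rightarrow> 'a) set)" "unit_vec ` {..<r} \<subseteq> ambient v"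
    using independent_unit_vecs unit_vecs_subset_ambient[OF assms(1)] by auto
  have "card (insert w (unit_vec ` {..<r})) = r + 1"
    using assms(3) fvs.span_base[of w] card_unit_vecs[where 'a = 'a] by (auto simp: card_insert_if)
  then show ?thesis
    using kspace_span_independent[OF fvs.independent_insertI[OF assms(3) E(1)], of v] E(2) assms(2) by simp
qed

lemma kspace_span_singleton:
  assumes "x \<noteq> 0" "x \<in> ambient v"
  shows "kspace v 1 (fvs.span {x :: nat \<Rightarrow> 'a::field})"
proof -
  have "fvs.dim (fvs.span {x}) = 1"
    using assms(1) fvs.dim_span_eq_card_independent[of "{x}"] by simp
  moreover have "fvs.span {x} \<subseteq> ambient v"
    using fvs.span_minimal[OF _ subspace_ambient] assms(2) by blast
  ultimately show ?thesis
    by (simp add: kspace_def)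
qed

lemma Union_points_subset: "\<Union> (points v S) \<subseteq> S"
  by (auto simp: points_def)

lemma diff_subset_Union_points:
  assumes "kspace v k (L :: (nat \<Rightarrow> 'a::field) set)" "fvs.subspace F"
  shows "L - F \<subseteq> \<Union> (points v L - points v F)"
proof
  fix y
  assume y: "y \<in> L - F"
  then have "y \<noteq> 0"
    using fvs.subspace_0[OF assms(2)] by auto
  moreover have "y \<in> ambient v"
    using assms(1) y by (auto simp: kspace_def)
  moreover have "fvs.span {y} \<subseteq> L"
    using assms(1) y by (intro fvs.span_minimal) (auto simp: kspace_def)
  moreover have "y \<in> fvs.span {y}"
    by (simp add: fvs.span_base)
  ultimately show "y \<in> \<Union> (points v L - points v F)"
    using y kspace_span_singleton[of y v] by (auto simp: points_def)
qed

lemma count_sum_mset_set: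
  assumes "finite I" "\<And>i. i \<in> I \<Longrightarrow> finite (A i)"
  shows "count (\<Sum>i\<in>I. mset_set (A i)) x = card {i \<in> I. x \<in> A i}"
  using assms by (simp add: count_sum count_mset_set' sum.inter_filter[symmetric])

lemma projective_sum_mset_set_iff:
  assumes "finite I" "\<And>i. i \<in> I \<Longrightarrow> finite (A i)"
  shows "projective_mset (\<Sum>i\<in>I. mset_set (A i)) \<longleftrightarrow> disjoint_family_on A I"
  using assms
  by (auto simp: projective_mset_def count_sum_mset_set card_le_Suc0_iff_eq disjoint_family_on_def)

lemma set_mset_sum_mset_set:
  assumes "finite I" "\<And>i. i \<in> I \<Longrightarrow> finite (A i)"
  shows "set_mset (\<Sum>i\<in>I. mset_set (A i)) = (\<Union>i\<in>I. A i)"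
  using assms by (simp add: set_mset_sum)

section \<open>Necessity\<close>

lemma two_le_card_field: "2 \<le> card (UNIV :: 'a::{finite,field} set)"
  using card_mono[of "UNIV :: 'a set" "{0, 1}"] by simp

lemma cylinder_projective_imp_ge:
  assumes "cylinder v r (C :: (nat \<Rightarrow> 'a::{finite,field}) set multiset)" "projective_mset C"
  shows "r + 2 \<le> v"
proof -
  define q where "q = card (UNIV :: 'a set)"
  have "2 \<le> q" unfolding q_def by (rule two_le_card_field)
  obtain L F where F: "kspace v r F" and L: "\<And>i. i < q \<Longrightarrow> kspace v (r + 1) (L i) \<and> F \<subseteq> L i"
    and C: "C = (\<Sum>i<q. mset_set (points v (L i) - points v F))"
    using assms(1) unfolding cylinder_def q_def by blast
  have "v \<noteq> r + 1"
  proof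
    assume "v = r + 1"
    have "L i = ambient v" if "i < q" for i
      using L[OF that] \<open>v = r + 1\<close>
      by (intro kspace_eq_of_subset[OF _ kspace_ambient]) (auto simp: kspace_def)
    then have "L 0 = L 1"
      using \<open>2 \<le> q\<close> by simp
    have "L 0 - F \<subseteq> \<Union> (points v (L 0) - points v F)"
      using L[of 0] F \<open>2 \<le> q\<close> by (intro diff_subset_Union_points) (auto simp: kspace_def)
    moreover have "L 0 - F \<noteq> {}"
      using kspace_not_subset[OF F] L[of 0] \<open>2 \<le> q\<close> by auto
    ultimately obtain P where P: "P \<in> points v (L 0) - points v F"
      by blast
    have "disjoint_family_on (\<lambda>i. points v (L i) - points v F) {..<q}"
      using assms(2) unfolding C by (subst (asm) projective_sum_mset_set_iff) (auto simp: finite_points)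
    then have "(points v (L 0) - points v F) \<inter> (points v (L 1) - points v F) = {}"
      using \<open>2 \<le> q\<close> by (intro disjoint_family_onD) auto
    moreover have "P \<in> (points v (L 0) - points v F) \<inter> (points v (L 1) - points v F)"
      using P \<open>L 0 = L 1\<close> by simp
    ultimately show False
      by simp
  qed
  moreover have "r + 1 \<le> v"
    using kspace_dim_le L[of 0] \<open>2 \<le> q\<close> by auto
  ultimately show ?thesis by simp
qed

lemma cylinder_spanning_imp_le:
  assumes "cylinder v r (C :: (nat \<Rightarrow> 'a::{finite,field}) set multiset)" "spanning v C"
  shows "v \<le> r + card (UNIV :: 'a set)"
proof -
  define q where "q = card (UNIV :: 'a set)"
  obtain L F where F: "kspace v r F" and L: "\<And>i. i < q \<Longrightarrow> kspace v (r + 1) (L i) \<and> F \<subseteq> L i"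
    and C: "C = (\<Sum>i<q. mset_set (points v (L i) - points v F))"
    using assms(1) unfolding cylinder_def q_def by blast
  have "\<forall>i<q. \<exists>y. y \<in> L i \<and> y \<notin> F"
    using kspace_not_subset[OF F] L by blast
  then obtain x where x: "\<And>i. i < q \<Longrightarrow> x i \<in> L i \<and> x i \<notin> F"
    by metis
  obtain B where B: "B \<subseteq> F" "fvs.independent B" "F \<subseteq> fvs.span B" "card B = r"
    using fvs.basis_exists F unfolding kspace_def by metis
  have "finite B"
    using fvs.independent_span_bound[OF _ B(2), of "unit_vec ` {..<v}"] B(1) F
    by (auto simp: kspace_def ambient_eq_span_unit_vecs)
  define X where "X = B \<union> x ` {..<q}"
  have L_X: "L i \<subseteq> fvs.span X" if "i < q" for i
  proof -
    have "insert (x i) F \<subseteq> fvs.span X"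
      using that B(3) fvs.span_mono[of B X] fvs.span_base[of "x i" X] by (auto simp: X_def)
    have "L i = fvs.span (insert (x i) F)"
      using kspace_eq_span_insert[OF F] L[OF that] x[OF that] by blast
    also have "\<dots> \<subseteq> fvs.span X"
      by (rule fvs.span_minimal[OF _ fvs.subspace_span]) fact
    finally show ?thesis .
  qed
  have "\<Union> (set_mset C) \<subseteq> (\<Union>i<q. \<Union> (points v (L i)))"
    by (auto simp: C set_mset_sum finite_points)
  also have "\<dots> \<subseteq> fvs.span X"
    using L_X by (intro UN_least subset_trans[OF Union_points_subset]) auto
  finally have "\<Union> (set_mset C) \<subseteq> fvs.span X" .
  then have "fvs.span (\<Union> (set_mset C)) \<subseteq> fvs.span X"
    by (rule fvs.span_minimal[OF _ fvs.subspace_span])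
  then have "ambient v \<subseteq> fvs.span X"
    using assms(2) by (simp add: spanning_def)
  then have "v \<le> card X"
    using fvs.dim_le_card[of "ambient v" X] \<open>finite B\<close> by (simp add: X_def dim_ambient)
  also have "\<dots> \<le> r + q"
    using card_Un_le[of B "x ` {..<q}"] card_image_le[of "{..<q}" x] B(4) by (simp add: X_def)
  finally show ?thesis by (simp add: q_def)
qed

section \<open>Sufficiency\<close>

lemma span_insert_unit_vecs_tail:
  assumes "x \<in> fvs.span (insert w (unit_vec ` {..<r}) :: (nat \<Rightarrow> 'a::field) set)"
  obtains a where "\<forall>k\<ge>r. x k = a * w k"
proof -
  let ?T = "{x. \<exists>a. \<forall>k\<ge>r. x k = a * w k}"
  have "fvs.subspace ?T"
  proof (rule fvs.subspaceI)
    show "0 \<in> ?T" by (auto intro!: exI[of _ 0])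
  next
    fix x y assume "x \<in> ?T" "y \<in> ?T"
    then obtain a b where "\<forall>k\<ge>r. x k = a * w k" "\<forall>k\<ge>r. y k = b * w k" by blast
    then show "x + y \<in> ?T" by (auto intro!: exI[of _ "a + b"] simp: distrib_right)
  next
    fix c x assume "x \<in> ?T"
    then obtain a where "\<forall>k\<ge>r. x k = a * w k" by blast
    then show "fscale c x \<in> ?T" by (auto intro!: exI[of _ "c * a"] simp: fscale_def mult.assoc)
  qed
  moreover have "w \<in> ?T"
    by (intro CollectI exI[of _ 1]) simp
  moreover have "unit_vec j \<in> ?T" if "j < r" for j
    using that by (intro CollectI exI[of _ 0]) (simp add: unit_vec_apply)
  ultimately have "fvs.span (insert w (unit_vec ` {..<r})) \<subseteq> ?T"
    by (intro fvs.span_minimal) auto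
  with assms that show thesis by blast
qed

lemma points_diff_disjoint_of_not_proportional:
  fixes w w' :: "nat \<Rightarrow> 'a::field" and r :: nat
  defines "E \<equiv> unit_vec ` {..<r}"
  assumes "\<And>a b. a \<noteq> 0 \<Longrightarrow> b \<noteq> 0 \<Longrightarrow> \<exists>k\<ge>r. a * w k \<noteq> b * w' k"
  shows "(points v (fvs.span (insert w E)) - points v (fvs.span E)) \<inter>
         (points v (fvs.span (insert w' E)) - points v (fvs.span E)) = {}"
proof (rule ccontr)
  assume "\<not> ?thesis"
  then obtain P where "P \<subseteq> fvs.span (insert w E)" "P \<subseteq> fvs.span (insert w' E)" "\<not> P \<subseteq> fvs.span E"
    by (auto simp: points_def)
  then obtain p where p: "p \<in> fvs.span (insert w E)" "p \<in> fvs.span (insert w' E)" "p \<notin> fvs.span E"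
    by blast
  obtain a where a: "\<forall>k\<ge>r. p k = a * w k"
    using span_insert_unit_vecs_tail p(1) unfolding E_def by blast
  obtain b where b: "\<forall>k\<ge>r. p k = b * w' k"
    using span_insert_unit_vecs_tail p(2) unfolding E_def by blast
  obtain k where "k \<ge> r" "p k \<noteq> 0"
    using in_span_unit_vecs[of r p] p(3) unfolding E_def by auto
  then have "a \<noteq> 0" "b \<noteq> 0"
    using a b by auto
  then obtain k' where "k' \<ge> r" "a * w k' \<noteq> b * w' k'"
    using assms(2) by blast
  with a b show False
    by simp
qed

definition cylinder_direction :: "nat \<Rightarrow> nat \<Rightarrow> (nat \<Rightarrow> 'a) \<Rightarrow> nat \<Rightarrow> nat \<Rightarrow> 'a::field" where
  "cylinder_direction r n c i =
     (if i < n then unit_vec (r + i) else unit_vec r + fscale (c (i - n)) (unit_vec (r + 1)))"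

lemma cylinder_direction_not_proportional:
  fixes c :: "nat \<Rightarrow> 'a::field"
  assumes n: "2 \<le> n" and c: "inj_on c {..<q - n}" "0 \<notin> c ` {..<q - n}"
    and ij: "i < q" "j < q" "i \<noteq> j" and ab: "a \<noteq> 0" "b \<noteq> 0"
  shows "\<exists>k\<ge>r. a * cylinder_direction r n c i k \<noteq> b * cylinder_direction r n c j k"
proof (rule ccontr)
  define w where "w = cylinder_direction r n c"
  assume "\<not> ?thesis"
  then have eq: "a * w i k = b * w j k" if "r \<le> k" for k
    using that unfolding w_def by blast
  have c_ne: "c (l - n) \<noteq> 0" if "n \<le> l" "l < q" for l
    using c(2) that by force
  consider "i < n" "j < n" | "i < n" "n \<le> j" | "n \<le> i" "j < n" | "n \<le> i" "n \<le> j"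
    by linarith
  then show False
  proof cases
    case 1
    then show ?thesis
      using eq[of "r + i"] ij(3) ab by (simp add: w_def cylinder_direction_def unit_vec_apply)
  next
    case 2
    then show ?thesis
      using eq[of r] eq[of "r + 1"] ab c_ne[of j] ij
      by (cases "i = 0") (simp_all add: w_def cylinder_direction_def unit_vec_apply fscale_def)
  next
    case 3
    then show ?thesis
      using eq[of r] eq[of "r + 1"] ab c_ne[of i] ij
      by (cases "j = 0") (simp_all add: w_def cylinder_direction_def unit_vec_apply fscale_def)
  next
    case 4
    then have "a = b" "a * c (i - n) = b * c (j - n)"
      using eq[of r] eq[of "r + 1"] by (simp_all add: w_def cylinder_direction_def unit_vec_apply fscale_def)
    then have "c (i - n) = c (j - n)"
      using ab by simp
    then have "i - n = j - n"
      using c(1) 4 ij by (auto dest: inj_onD)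
    then show ?thesis
      using 4 ij(3) by simp
  qed
qed

lemma unit_vecs_subset_span_cylinder_directions:
  fixes c :: "nat \<Rightarrow> 'a::field" and r v q :: nat
  defines "E \<equiv> unit_vec ` {..<r}"
  defines "L \<equiv> \<lambda>i. fvs.span (insert (cylinder_direction r (v - r) c i) E)"
  assumes "r + 2 \<le> v" "v \<le> r + q"
  shows "unit_vec ` {..<v} \<subseteq> fvs.span (\<Union>i<q. L i - fvs.span E)"
proof -
  let ?U = "fvs.span (\<Union>i<q. L i - fvs.span E)"
  have L_U: "x \<in> ?U" if "i < q" "x \<in> L i" "x \<notin> fvs.span E" for i x
    using that by (intro fvs.span_base UN_I[of i]) simp_all
  have high: "unit_vec k \<in> ?U" if "r \<le> k" "k < v" for k
  proof (rule L_U)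
    show "k - r < q"
      using that assms by simp
    show "unit_vec k \<in> L (k - r)"
      using that by (auto simp: L_def cylinder_direction_def intro: fvs.span_base)
    show "unit_vec k \<notin> fvs.span E"
      using that not_in_span_unit_vecs[of r k "unit_vec k"] by (simp add: E_def unit_vec_apply)
  qed
  have low: "unit_vec k \<in> ?U" if "k < r" for k
  proof -
    have "unit_vec r + unit_vec k \<in> ?U"
    proof (rule L_U)
      show "0 < q"
        using assms by simp
      show "unit_vec r + unit_vec k \<in> L 0"
        using that assms by (auto simp: L_def E_def cylinder_direction_def intro: fvs.span_add fvs.span_base)
      show "unit_vec r + unit_vec k \<notin> fvs.span E"
        using that not_in_span_unit_vecs[of r r "unit_vec r + unit_vec k"] by (simp add: E_def unit_vec_apply)
    qed
    then show ?thesis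
      using fvs.span_diff[OF _ high[of r]] assms by fastforce
  qed
  show ?thesis
  proof (rule image_subsetI)
    fix k
    assume "k \<in> {..<v}"
    then show "unit_vec k \<in> ?U"
      using high low by (cases "r \<le> k") auto
  qed
qed

lemma cylinder_direction_ambient:
  assumes "r + n \<le> v" "2 \<le> n"
  shows "cylinder_direction r n c i \<in> ambient v"
  using assms by (auto simp: cylinder_direction_def unit_vec_apply fscale_def ambient_def)

lemma cylinder_direction_not_in_span:
  "cylinder_direction r n c i \<notin> fvs.span (unit_vec ` {..<r} :: (nat \<Rightarrow> 'a::field) set)"
  using not_in_span_unit_vecs[of r "if i < n then r + i else r" "cylinder_direction r n c i"]
  by (simp add: cylinder_direction_def unit_vec_apply fscale_def)

lemma ex_inj_nonzero_scalars:
  assumes "m < card (UNIV :: 'a set)"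
  obtains c :: "nat \<Rightarrow> 'a::{finite,field}" where "inj_on c {..<m}" "0 \<notin> c ` {..<m}"
proof -
  obtain c :: "nat \<Rightarrow> 'a" where c: "bij_betw c {..<card (UNIV :: 'a set) - 1} (UNIV - {0})"
    using ex_bij_betw_nat_finite[of "UNIV - {0::'a}"]
    by (auto simp: card_Diff_singleton atLeast0LessThan)
  have sub: "{..<m} \<subseteq> {..<card (UNIV :: 'a set) - 1}"
    using assms by auto
  show thesis
  proof (rule that)
    show "inj_on c {..<m}"
      using inj_on_subset[OF bij_betw_imp_inj_on[OF c] sub] .
    show "0 \<notin> c ` {..<m}"
      using image_mono[OF sub, of c] bij_betw_imp_surj_on[OF c] by blast
  qed
qed

lemma spanning_sum_points_diff:
  fixes q :: nat
  assumes "kspace v r F" "\<And>i. i < q \<Longrightarrow> kspace v (r + 1) (L i) \<and> F \<subseteq> L i"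
    and "ambient v \<subseteq> fvs.span (\<Union>i<q. L i - F)"
  shows "spanning v (\<Sum>i<q. mset_set (points v (L i) - points v (F :: (nat \<Rightarrow> 'a::{finite,field}) set)))"
proof -
  let ?C = "\<Sum>i<q. mset_set (points v (L i) - points v F)"
  have C_set: "set_mset ?C = (\<Union>i<q. points v (L i) - points v F)"
    by (rule set_mset_sum_mset_set) (simp_all add: finite_points)
  have C_diff: "(\<Union>i<q. L i - F) \<subseteq> \<Union> (set_mset ?C)"
    using diff_subset_Union_points[of v "r + 1" "L _" F] assms(1,2)
    unfolding C_set kspace_def by blast
  have C_ambient: "\<Union> (set_mset ?C) \<subseteq> ambient v"
    using assms(2) Union_points_subset unfolding C_set kspace_def by blast
  have "ambient v \<subseteq> fvs.span (\<Union> (set_mset ?C))"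
    using assms(3) fvs.span_mono[OF C_diff] by blast
  then show ?thesis
    using fvs.span_minimal[OF C_ambient subspace_ambient] by (simp add: spanning_def)
qed

lemma spanning_projective_cylinder_exists:
  assumes "r + 2 \<le> v" "v \<le> r + card (UNIV :: 'a set)"
  shows "\<exists>C :: (nat \<Rightarrow> 'a::{finite,field}) set multiset.
           cylinder v r C \<and> projective_mset C \<and> spanning v C"
proof -
  define q where "q = card (UNIV :: 'a set)"
  define n where "n = v - r"
  have n: "2 \<le> n" "r + n \<le> v" "r \<le> v"
    using assms unfolding n_def by auto
  have "q - n < card (UNIV :: 'a set)"
    using n(1) two_le_card_field[where 'a = 'a] by (simp add: q_def)
  then obtain c :: "nat \<Rightarrow> 'a" where c: "inj_on c {..<q - n}" "0 \<notin> c ` {..<q - n}"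
    by (rule ex_inj_nonzero_scalars)
  define E :: "(nat \<Rightarrow> 'a) set" where "E = unit_vec ` {..<r}"
  define F where "F = fvs.span E"
  define L where "L i = fvs.span (insert (cylinder_direction r n c i) E)" for i
  define C where "C = (\<Sum>i<q. mset_set (points v (L i) - points v F))"
  have F: "kspace v r F"
    unfolding F_def E_def using assms by (intro kspace_span_unit_vecs) simp
  have L: "kspace v (r + 1) (L i) \<and> F \<subseteq> L i" for i
    using kspace_span_insert_unit_vecs[OF n(3) cylinder_direction_ambient[OF n(2,1)]
        cylinder_direction_not_in_span]
    by (simp add: L_def F_def E_def fvs.span_mono subset_insertI)
  have "cylinder v r C"
    unfolding cylinder_def using F L by (intro exI[of _ L] exI[of _ F]) (simp add: C_def q_def)
  moreover have "projective_mset C"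
  proof -
    have "disjoint_family_on (\<lambda>i. points v (L i) - points v F) {..<q}"
      unfolding disjoint_family_on_def L_def F_def E_def
      using cylinder_direction_not_proportional[OF n(1) c]
      by (intro ballI impI points_diff_disjoint_of_not_proportional) auto
    then show ?thesis
      by (simp add: C_def projective_sum_mset_set_iff finite_points)
  qed
  moreover have "spanning v C"
  proof -
    have "unit_vec ` {..<v} \<subseteq> fvs.span (\<Union>i<q. L i - F)"
      using unit_vecs_subset_span_cylinder_directions[of r v q c] assms
      by (simp add: L_def F_def E_def n_def q_def)
    then have "ambient v \<subseteq> fvs.span (\<Union>i<q. L i - F)"
      unfolding ambient_eq_span_unit_vecs by (rule fvs.span_minimal[OF _ fvs.subspace_span])
    then show ?thesis
      unfolding C_def using spanning_sum_points_diff[OF F] L by blast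
  qed
  ultimately show ?thesis
    by blast
qed

theorem mainTheorem1:
  fixes r v :: nat
  shows "(\<exists>C :: (nat \<Rightarrow> 'a::{finite,field}) set multiset.
            cylinder v r C \<and> projective_mset C \<and> spanning v C)
         \<longleftrightarrow> r + 2 \<le> v \<and> v \<le> r + card (UNIV :: 'a set)"
  using cylinder_projective_imp_ge cylinder_spanning_imp_le spanning_projective_cylinder_exists
  by metis

end
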